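(* Let $G=(V,E)$ be a connected hypergraph with at least two vertices. Then: (a) there exists at least one construction sequence; (b) if $G$ is a hypertree, then every construction sequence $(A_1,\ldots,A_m)$ satisfies $\big|\big(\bigcup_{i=1}^{\ell-1}A_i\big)\cap A_\ell\big|=1$ for all $2\le\ell\le m$; (c) if $G$ is not a hypertree, then every construction sequence $(A_1,\ldots,A_m)$ satisfies $\big|\big(\bigcup_{i=1}^{\ell-1}A_i\big)\cap A_\ell\big|\ge2$ for at least one $\ell$.
   Context: A hypergraph is a pair $G=(V,E)$ with $V$ finite and $E$ a set of subsets of $V$, each of cardinality at least 2. A walk is a sequence $(v_0,e_1,v_1,\ldots,e_k,v_k)$ with $v_i\in V$, $e_i\in E$ and $v_{i-1},v_i\in e_i$; $G$ is connected if any two vertices are joined by a walk. A cycle is a walk with $v_0,\ldots,v_{k-1}$ distinct, $v_k=v_0$, $e_1,\ldots,e_k$ distinct and $k\ge2$. A hypertree is a connected hypergraph with no cycles. For a connected hypergraph with $|V|\ge2$, a construction sequence is an ordering $(A_1,\ldots,A_m)$ of all of $E$ such that $\big(\bigcup_{i=1}^{\ell-1}A_i\big)\cap A_\ell\neq\emptyset$ for $2\le\ell\le m$. *)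

theory Defs
  imports Main
begin

definition hypergraph :: "'a set \<Rightarrow> 'a set set \<Rightarrow> bool" where
  "hypergraph V E \<longleftrightarrow> finite V \<and> (\<forall>e\<in>E. e \<subseteq> V \<and> card e \<ge> 2)"

text \<open>A walk (v_0,e_1,v_1,...,e_k,v_k) is given by the vertex list vs = [v_0,...,v_k]
  and the edge list es = [e_1,...,e_k]; so length vs = length es + 1.\<close>
definition is_walk :: "'a set \<Rightarrow> 'a set set \<Rightarrow> 'a list \<Rightarrow> 'a set list \<Rightarrow> bool" where
  "is_walk V E vs es \<longleftrightarrow> length vs = Suc (length es) \<and> set vs \<subseteq> V \<and> set es \<subseteq> E \<and>
     (\<forall>i < length es. vs ! i \<in> es ! i \<and> vs ! Suc i \<in> es ! i)"

definition hg_connected :: "'a set \<Rightarrow> 'a set set \<Rightarrow> bool" where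
  "hg_connected V E \<longleftrightarrow> (\<forall>u\<in>V. \<forall>w\<in>V. \<exists>vs es. is_walk V E vs es \<and> hd vs = u \<and> last vs = w)"

definition is_cycle :: "'a set \<Rightarrow> 'a set set \<Rightarrow> 'a list \<Rightarrow> 'a set list \<Rightarrow> bool" where
  "is_cycle V E vs es \<longleftrightarrow> is_walk V E vs es \<and> length es \<ge> 2 \<and>
     distinct (butlast vs) \<and> last vs = hd vs \<and> distinct es"

definition hypertree :: "'a set \<Rightarrow> 'a set set \<Rightarrow> bool" where
  "hypertree V E \<longleftrightarrow> hg_connected V E \<and> \<not> (\<exists>vs es. is_cycle V E vs es)"

text \<open>Construction sequence (A_1,...,A_m) as a list As (0-indexed: As!0 = A_1):
  an ordering of all of E, and for 2 \<le> l \<le> m, (A_1 \<union> ... \<union> A_(l-1)) \<inter> A_l \<noteq> {}.\<close>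
definition construction_seq :: "'a set set \<Rightarrow> 'a set list \<Rightarrow> bool" where
  "construction_seq E As \<longleftrightarrow> distinct As \<and> set As = E \<and>
     (\<forall>l. 2 \<le> l \<and> l \<le> length As \<longrightarrow> (\<Union>i\<in>{1..<l}. As ! (i - 1)) \<inter> As ! (l - 1) \<noteq> {})"

end

theory Submission
  imports Defs
begin

text \<open>A construction sequence is grown greedily: in a connected hypergraph some unused edge
  always meets the union of the edges used so far. The edges of every prefix of a construction
  sequence form a connected family. So if \<open>A\<^sub>l\<close> met the earlier union in two vertices, a path
  between them through earlier edges would be closed by \<open>A\<^sub>l\<close> to a cycle. Conversely, given a
  cycle, let \<open>A\<^sub>l\<close> be its edge occurring last in the sequence: both of its vertices on the cycle
  also lie on a neighbouring cycle edge, which occurs earlier.\<close>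

inductive walk_on :: "'a set set \<Rightarrow> 'a list \<Rightarrow> 'a set list \<Rightarrow> bool" for F where
  walk_on_single: "walk_on F [x] []"
| walk_on_Cons: "e \<in> F \<Longrightarrow> x \<in> e \<Longrightarrow> y \<in> e \<Longrightarrow> walk_on F (y # vs) es \<Longrightarrow> walk_on F (x # y # vs) (e # es)"

lemma walk_on_length: "walk_on F vs es \<Longrightarrow> length vs = Suc (length es)"
  by (induction rule: walk_on.induct) auto

lemma walk_on_not_Nil: "walk_on F vs es \<Longrightarrow> vs \<noteq> []"
  using walk_on_length by fastforce

lemma walk_on_mono: "walk_on F vs es \<Longrightarrow> F \<subseteq> G \<Longrightarrow> walk_on G vs es"
  by (induction rule: walk_on.induct) (auto intro: walk_on.intros)

lemma walk_on_vertices: "walk_on F vs es \<Longrightarrow> set vs \<subseteq> insert (hd vs) (\<Union>(set es))"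
  by (induction rule: walk_on.induct) auto

lemma walk_on_iff_nth:
  "walk_on F vs es \<longleftrightarrow> length vs = Suc (length es) \<and> set es \<subseteq> F \<and>
     (\<forall>i < length es. vs ! i \<in> es ! i \<and> vs ! Suc i \<in> es ! i)"
proof (induction es arbitrary: vs)
  case Nil
  show ?case
    by (auto elim: walk_on.cases intro: walk_on.intros simp: length_Suc_conv)
next
  case (Cons e es)
  show ?case
  proof
    assume "walk_on F vs (e # es)"
    then show "length vs = Suc (length (e # es)) \<and> set (e # es) \<subseteq> F \<and>
        (\<forall>i < length (e # es). vs ! i \<in> (e # es) ! i \<and> vs ! Suc i \<in> (e # es) ! i)"
      by cases (auto simp: Cons.IH less_Suc_eq_0_disj)
  next
    assume "length vs = Suc (length (e # es)) \<and> set (e # es) \<subseteq> F \<and>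
        (\<forall>i < length (e # es). vs ! i \<in> (e # es) ! i \<and> vs ! Suc i \<in> (e # es) ! i)"
    moreover from this obtain x y vs' where "vs = x # y # vs'"
      by (auto simp: length_Suc_conv)
    ultimately show "walk_on F vs (e # es)"
      by (force intro!: walk_on_Cons simp: Cons.IH)
  qed
qed

lemma is_walk_iff_walk_on: "is_walk V E vs es \<longleftrightarrow> set vs \<subseteq> V \<and> walk_on E vs es"
  unfolding is_walk_def walk_on_iff_nth by blast

lemma walk_on_append:
  "walk_on F (vs @ [u]) es \<Longrightarrow> walk_on F (u # ws) fs \<Longrightarrow> walk_on F (vs @ u # ws) (es @ fs)"
proof (induction "vs @ [u]" es arbitrary: vs rule: walk_on.induct)
  case (walk_on_single x)
  then show ?case by simp
next
  case (walk_on_Cons e x y vs' es)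
  then obtain vs'' where "vs = x # vs''" "y # vs' = vs'' @ [u]"
    by (cases vs) auto
  with walk_on_Cons show ?case
    by (cases vs'') (auto intro: walk_on.intros)
qed

lemma walk_on_append_last:
  "walk_on F vs es \<Longrightarrow> walk_on F (last vs # ws) fs \<Longrightarrow> walk_on F (vs @ ws) (es @ fs)"
  by (metis append_butlast_last_id append_assoc append_Cons append_Nil walk_on_append walk_on_not_Nil)

lemma walk_on_split:
  assumes "walk_on F (vs @ u # ws) es"
  obtains es1 es2 where "es = es1 @ es2" "length es1 = length vs"
    "walk_on F (vs @ [u]) es1" "walk_on F (u # ws) es2"
  using assms
proof (induction vs arbitrary: es thesis)
  case Nil
  then show ?case by (auto intro: walk_on_single)
next
  case (Cons x vs)
  from Cons.prems(2) obtain e es' where es: "es = e # es'" "e \<in> F" "x \<in> e" "hd (vs @ [u]) \<in> e"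
      "walk_on F (vs @ u # ws) es'"
    by (cases vs) (auto elim: walk_on.cases)
  from Cons.IH[OF _ es(5)] obtain es1 es2 where
    "es' = es1 @ es2" "length es1 = length vs" "walk_on F (vs @ [u]) es1" "walk_on F (u # ws) es2"
    by blast
  moreover have "walk_on F (x # vs @ [u]) (e # es1)"
    using es \<open>walk_on F (vs @ [u]) es1\<close> by (cases vs) (auto intro: walk_on_Cons)
  ultimately show ?case
    using es by (intro Cons.prems(1)[of "e # es1" es2]) auto
qed

lemma walk_on_rev: "walk_on F vs es \<Longrightarrow> walk_on F (rev vs) (rev es)"
proof (induction rule: walk_on.induct)
  case (walk_on_single x)
  then show ?case by (simp add: walk_on.walk_on_single)
next
  case (walk_on_Cons e x y vs es)
  have "walk_on F [y, x] [e]"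
    using walk_on_Cons by (auto intro: walk_on.intros)
  with walk_on_Cons.IH show ?case
    using walk_on_append[of F "rev vs" y "rev es" "[x]" "[e]"] by simp
qed

lemma walk_on_split_edges:
  assumes "walk_on F vs (es1 @ es2)"
  obtains ws u us where "vs = ws @ u # us" "walk_on F (ws @ [u]) es1" "walk_on F (u # us) es2"
proof -
  have len: "length es1 < length vs"
    using walk_on_length[OF assms] by simp
  then have "vs = take (length es1) vs @ vs ! length es1 # drop (Suc (length es1)) vs"
    by (simp add: id_take_nth_drop)
  with assms obtain fs1 fs2 where fs: "es1 @ es2 = fs1 @ fs2" "length fs1 = length es1"
      "walk_on F (take (length es1) vs @ [vs ! length es1]) fs1"
      "walk_on F (vs ! length es1 # drop (Suc (length es1)) vs) fs2"
    by (metis walk_on_split len length_take min.absorb4)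
  then have "fs1 = es1" "fs2 = es2"
    by (auto simp: append_eq_append_conv)
  with fs \<open>vs = _\<close> show ?thesis
    using that by metis
qed

lemma walk_on_Cons_edge: "walk_on F (u # vs) (e # es) \<Longrightarrow> u \<in> e"
  by (auto elim: walk_on.cases)

lemma walk_on_drop_vertex_repeat:
  assumes "walk_on F vs es" and "\<not> distinct vs"
  obtains vs' es' where "walk_on F vs' es'" "hd vs' = hd vs" "last vs' = last vs"
    "length es' < length es"
proof -
  obtain a u b c where vs: "vs = a @ u # b @ u # c"
    using assms(2) not_distinct_decomp by fastforce
  with assms(1) obtain es1 es2 where es: "es = es1 @ es2"
      "walk_on F (a @ [u]) es1" "walk_on F (u # b @ u # c) es2"
    by (auto elim: walk_on_split)
  from es(3) have "walk_on F ((u # b) @ u # c) es2"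
    by simp
  then obtain es3 es4 where "es2 = es3 @ es4" "length es3 = Suc (length b)"
      "walk_on F (u # c) es4"
    by (rule walk_on_split) simp
  with es have "walk_on F (a @ u # c) (es1 @ es4)" "length (es1 @ es4) < length es"
    by (auto intro: walk_on_append)
  moreover have "hd (a @ u # c) = hd vs" "last (a @ u # c) = last vs"
    using vs by (simp_all add: hd_append last_append)
  ultimately show ?thesis
    using that by blast
qed

lemma walk_on_drop_edge_repeat:
  assumes "walk_on F vs es" and "\<not> distinct es"
  obtains vs' es' where "walk_on F vs' es'" "hd vs' = hd vs" "last vs' = last vs"
    "length es' < length es"
proof -
  obtain p e q r where es: "es = p @ e # q @ e # r"
    using assms(2) not_distinct_decomp by fastforce
  with assms(1) obtain a u b where vs: "vs = a @ u # b"
      and wa: "walk_on F (a @ [u]) p" and wb: "walk_on F (u # b) ((e # q) @ e # r)"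
    by (metis append_Cons walk_on_split_edges)
  from wb obtain a' u' b' where b: "u # b = a' @ u' # b'" "walk_on F (u' # b') (e # r)"
    by (rule walk_on_split_edges)
  then obtain y b'' where b': "b' = y # b''" "y \<in> e" "e \<in> F" "walk_on F (y # b'') r"
    by (auto elim: walk_on.cases)
  have "walk_on F (u # y # b'') (e # r)"
    using b' wb walk_on_Cons_edge[of F u b e] by (auto intro: walk_on_Cons)
  with wa have "walk_on F (a @ u # y # b'') (p @ e # r)"
    by (rule walk_on_append)
  moreover have "last (u # b) = last (u' # b')"
    using b(1) by (metis last_appendR list.distinct(1))
  with vs b' have "last (a @ u # y # b'') = last vs"
    by (simp add: last_append)
  moreover have "hd (a @ u # y # b'') = hd vs"
    using vs by (simp add: hd_append)
  ultimately show ?thesis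
    using that es by simp
qed

lemma walk_on_shortcut:
  assumes "walk_on F vs es"
  obtains vs' es' where "walk_on F vs' es'" "hd vs' = hd vs" "last vs' = last vs"
    "distinct vs'" "distinct es'"
  using assms
proof (induction "length es" arbitrary: vs es rule: less_induct)
  case less
  show ?case
  proof (cases "distinct vs \<and> distinct es")
    case True
    then show ?thesis
      using less.prems by blast
  next
    case False
    then obtain vs' es' where "walk_on F vs' es'" "hd vs' = hd vs" "last vs' = last vs"
        "length es' < length es"
      using walk_on_drop_vertex_repeat walk_on_drop_edge_repeat less.prems(2) by metis
    then show ?thesis
      using less.hyps less.prems(1) by metis
  qed
qed

definition linked :: "'a set set \<Rightarrow> 'a \<Rightarrow> 'a \<Rightarrow> bool" where
  "linked F x y \<longleftrightarrow> (\<exists>vs es. walk_on F vs es \<and> hd vs = x \<and> last vs = y)"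

lemma linked_edge: "e \<in> F \<Longrightarrow> x \<in> e \<Longrightarrow> y \<in> e \<Longrightarrow> linked F x y"
  unfolding linked_def by (auto intro!: exI[of _ "[x, y]"] walk_on.intros)

lemma linked_sym: "linked F x y \<Longrightarrow> linked F y x"
  unfolding linked_def by (metis hd_rev last_rev walk_on_rev)

lemma linked_trans: "linked F x y \<Longrightarrow> linked F y z \<Longrightarrow> linked F x z"
  unfolding linked_def
  by (metis hd_append2 last_appendR list.collapse list.sel(3) walk_on_append_last walk_on_not_Nil
      last_ConsL last_ConsR append.right_neutral)

lemma linked_mono: "linked F x y \<Longrightarrow> F \<subseteq> G \<Longrightarrow> linked G x y"
  unfolding linked_def by (metis walk_on_mono)

definition edges_connected :: "'a set set \<Rightarrow> bool" where
  "edges_connected F \<longleftrightarrow> (\<forall>x\<in>\<Union>F. \<forall>y\<in>\<Union>F. linked F x y)"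

lemma edges_connected_singleton: "edges_connected {e}"
  unfolding edges_connected_def by (auto intro: linked_edge)

lemma edges_connected_insert:
  assumes "edges_connected F" and "e \<inter> \<Union>F \<noteq> {}"
  shows "edges_connected (insert e F)"
proof -
  obtain z where z: "z \<in> e" "z \<in> \<Union>F"
    using assms(2) by blast
  have to_z: "linked (insert e F) x z" if "x \<in> \<Union>(insert e F)" for x
  proof (cases "x \<in> e")
    case True
    then show ?thesis
      using z by (auto intro: linked_edge)
  next
    case False
    then show ?thesis
      using that assms(1) z unfolding edges_connected_def by (blast intro: linked_mono)
  qed
  show ?thesis
    unfolding edges_connected_def by (metis to_z linked_sym linked_trans)
qed

lemma Union_nth_pred_eq_Union_take:
  assumes "n \<le> length As"
  shows "(\<Union>i\<in>{1..<Suc n}. As ! (i - 1)) = \<Union>(set (take n As))"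
proof -
  have "(\<lambda>i. As ! (i - 1)) ` {1..<Suc n} = (!) As ` {0..<n}"
    by (force simp: image_iff Bex_def)
  then show ?thesis
    using nth_image[OF assms] by metis
qed

definition construction_order :: "'a set list \<Rightarrow> bool" where
  "construction_order As \<longleftrightarrow> (\<forall>n. 1 \<le> n \<and> n < length As \<longrightarrow> \<Union>(set (take n As)) \<inter> As ! n \<noteq> {})"

lemma all_from_2_iff_all_Suc_from_1:
  "(\<forall>l. 2 \<le> l \<and> l \<le> L \<longrightarrow> P l) \<longleftrightarrow> (\<forall>n. 1 \<le> n \<and> n < L \<longrightarrow> P (Suc n))"
  by (metis Suc_le_eq Suc_le_mono Suc_pred' le_zero_eq nat_1_add_1 not_gr0 one_add_one
      plus_1_eq_Suc zero_neq_numeral)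

lemma construction_seq_iff:
  "construction_seq E As \<longleftrightarrow> distinct As \<and> set As = E \<and> construction_order As"
  unfolding construction_seq_def construction_order_def all_from_2_iff_all_Suc_from_1
  by (auto simp del: One_nat_def simp: Union_nth_pred_eq_Union_take)

lemma construction_order_snoc:
  "construction_order As \<Longrightarrow> e \<inter> \<Union>(set As) \<noteq> {} \<Longrightarrow> construction_order (As @ [e])"
  unfolding construction_order_def by (auto simp: nth_append less_Suc_eq)

lemma construction_order_prefix_connected:
  assumes "construction_order As"
  shows "1 \<le> n \<Longrightarrow> n \<le> length As \<Longrightarrow> edges_connected (set (take n As))"
proof (induction n rule: nat_induct_at_least)
  case base
  then show ?case
    by (cases As) (auto intro: edges_connected_singleton)
next
  case (Suc n)
  then have "set (take (Suc n) As) = insert (As ! n) (set (take n As))"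
    by (simp add: take_Suc_conv_app_nth)
  with Suc assms show ?case
    unfolding construction_order_def by (auto simp: Int_commute intro!: edges_connected_insert)
qed

lemma hypergraph_finite_edges: "hypergraph V E \<Longrightarrow> finite E"
  unfolding hypergraph_def by (meson Pow_iff finite_Pow_iff finite_subset subsetI)

lemma walk_on_leaving_edge:
  "walk_on F vs es \<Longrightarrow> hd vs \<in> U \<Longrightarrow> last vs \<notin> U \<Longrightarrow> \<exists>e\<in>set es. e \<inter> U \<noteq> {} \<and> \<not> e \<subseteq> U"
  by (induction rule: walk_on.induct) auto

lemma connected_edge_meets_subfamily:
  assumes "hypergraph V E" and "hg_connected V E" and "F \<subseteq> E" and "F \<noteq> {}" and "F \<noteq> E"
  shows "\<exists>e\<in>E - F. e \<inter> \<Union>F \<noteq> {}"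
proof -
  have edge: "e \<noteq> {} \<and> e \<subseteq> V" if "e \<in> E" for e
    using assms(1) that unfolding hypergraph_def by fastforce
  obtain f x where f: "f \<in> E - F" "x \<in> f"
    using assms(3,5) edge by blast
  obtain y where y: "y \<in> \<Union>F"
    using assms(3,4) edge by blast
  show ?thesis
  proof (cases "x \<in> \<Union>F")
    case True
    then show ?thesis
      using f by blast
  next
    case False
    have "x \<in> V" "y \<in> V"
      using assms(3) f y edge by blast+
    then obtain vs es where walk: "walk_on E vs es" "hd vs = y" "last vs = x"
      using assms(2) unfolding hg_connected_def is_walk_iff_walk_on by blast
    then obtain e where "e \<in> set es" "e \<inter> \<Union>F \<noteq> {}" "\<not> e \<subseteq> \<Union>F"
      using walk_on_leaving_edge False y by metis
    moreover have "set es \<subseteq> E"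
      using walk(1) walk_on_iff_nth by blast
    ultimately show ?thesis
      by blast
  qed
qed

lemma construction_order_extends:
  assumes "hypergraph V E" and "hg_connected V E"
    and "distinct As" and "set As \<subseteq> E" and "As \<noteq> []" and "construction_order As"
  shows "\<exists>Bs. construction_seq E Bs"
  using assms(3-)
proof (induction "card E - length As" arbitrary: As rule: less_induct)
  case less
  show ?case
  proof (cases "set As = E")
    case True
    then show ?thesis
      using less.prems construction_seq_iff by blast
  next
    case False
    then obtain e where e: "e \<in> E - set As" "e \<inter> \<Union>(set As) \<noteq> {}"
      using connected_edge_meets_subfamily[OF assms(1,2) less.prems(2)] less.prems(3) by auto
    have "length As < card E"
      using False less.prems(1,2) hypergraph_finite_edges[OF assms(1)]
      by (metis distinct_card psubsetI psubset_card_mono)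
    moreover have "construction_order (As @ [e])"
      using less.prems(4) e(2) by (rule construction_order_snoc)
    ultimately show ?thesis
      using less.prems e by (intro less.hyps[of "As @ [e]"]) auto
  qed
qed

lemma connected_edges_nonempty:
  assumes "hg_connected V E" and "card V \<ge> 2"
  shows "E \<noteq> {}"
proof -
  obtain u w where "u \<in> V" "w \<in> V" "u \<noteq> w"
  proof -
    have "finite V" "\<not> card V \<le> Suc 0"
      using assms(2) by (auto intro: card_ge_0_finite)
    then show ?thesis
      using that card_le_Suc0_iff_eq by blast
  qed
  then obtain vs es where "walk_on E vs es" "hd vs = u" "last vs = w"
    using assms(1) unfolding hg_connected_def is_walk_iff_walk_on by blast
  then show ?thesis
    using \<open>u \<noteq> w\<close> by (cases rule: walk_on.cases) auto
qed

lemma construction_seq_exists: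
  assumes "hypergraph V E" and "hg_connected V E" and "card V \<ge> 2"
  shows "\<exists>As. construction_seq E As"
proof -
  obtain e where "e \<in> E"
    using connected_edges_nonempty[OF assms(2,3)] by blast
  then show ?thesis
    using construction_order_extends[OF assms(1,2), of "[e]"] by (simp add: construction_order_def)
qed

lemma path_closed_by_new_edge_is_cycle:
  assumes walk: "walk_on E vs es" and "set vs \<subseteq> V" and "distinct vs" and "distinct es"
    and "e \<in> E" and "e \<notin> set es" and "hd vs \<in> e" and "last vs \<in> e" and "hd vs \<noteq> last vs"
  shows "is_cycle V E (vs @ [hd vs]) (es @ [e])"
proof -
  have "walk_on E [last vs, hd vs] [e]"
    using assms(5,7,8) by (auto intro: walk_on.intros)
  then have "walk_on E (vs @ [hd vs]) (es @ [e])"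
    using walk_on_append_last[OF walk] by simp
  moreover have "es \<noteq> []"
    using walk assms(9) by (cases rule: walk_on.cases) auto
  moreover have "hd vs \<in> V"
    using assms(2) walk_on_not_Nil[OF walk] by auto
  ultimately show ?thesis
    using assms(2-4,6) unfolding is_cycle_def is_walk_iff_walk_on
    by (auto simp: Suc_le_eq hd_append)
qed

lemma hypertree_meets_connected_family_once:
  assumes "hypergraph V E" and "hypertree V E" and "F \<subseteq> E" and "edges_connected F"
    and "e \<in> E" and "e \<notin> F" and a: "a \<in> \<Union>F \<inter> e" and b: "b \<in> \<Union>F \<inter> e"
  shows "a = b"
proof (rule ccontr)
  assume "a \<noteq> b"
  have edges_V: "e' \<subseteq> V" if "e' \<in> E" for e'
    using assms(1) that unfolding hypergraph_def by blast
  have "linked F a b"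
    using assms(4) a b unfolding edges_connected_def by blast
  then obtain vs es where path: "walk_on F vs es" "hd vs = a" "last vs = b"
      "distinct vs" "distinct es"
    unfolding linked_def by (metis walk_on_shortcut)
  have es_F: "set es \<subseteq> F"
    using path(1) walk_on_iff_nth by blast
  have walk: "walk_on E vs es"
    using path(1) assms(3) by (rule walk_on_mono)
  have "\<Union>(set es) \<subseteq> V"
    using es_F assms(3) edges_V by blast
  moreover have "a \<in> V"
    using a edges_V assms(5) by blast
  ultimately have "set vs \<subseteq> V"
    using walk_on_vertices[OF walk] path(2) by blast
  then have "is_cycle V E (vs @ [a]) (es @ [e])"
    using path_closed_by_new_edge_is_cycle[OF walk] path es_F a b \<open>a \<noteq> b\<close> assms(5,6)
    by blast
  then show False
    using assms(2) unfolding hypertree_def by blast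
qed

lemma hypertree_construction_seq_meets_once:
  assumes "hypergraph V E" and "hypertree V E" and "construction_seq E As"
    and "1 \<le> n" and "n < length As"
  shows "card (\<Union>(set (take n As)) \<inter> As ! n) = 1"
proof -
  let ?F = "set (take n As)" and ?I = "\<Union>(set (take n As)) \<inter> As ! n"
  have As: "distinct As" "set As = E" "construction_order As"
    using assms(3) construction_seq_iff by blast+
  have "?F \<subseteq> E"
    using set_take_subset[of n As] As(2) by simp
  moreover have "edges_connected ?F"
    using construction_order_prefix_connected[OF As(3) assms(4)] assms(5) by simp
  moreover have "As ! n \<in> E"
    using As(2) assms(5) by auto
  moreover have "As ! n \<notin> ?F"
    using As(1) assms(5) by (auto simp: in_set_conv_nth nth_eq_iff_index_eq)
  ultimately have unique: "a = b" if "a \<in> ?I" "b \<in> ?I" for a b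
    using hypertree_meets_connected_family_once[OF assms(1,2)] that by blast
  obtain a where "a \<in> ?I"
    using As(3) assms(4,5) unfolding construction_order_def by blast
  with unique have "?I = {a}"
    by blast
  then show ?thesis
    by simp
qed

lemma distinct_last_member:
  assumes "distinct As" and "S \<subseteq> set As" and "S \<noteq> {}"
  shows "\<exists>n<length As. As ! n \<in> S \<and> S - {As ! n} \<subseteq> set (take n As)"
  using assms
proof (induction As rule: rev_induct)
  case Nil
  then show ?case by simp
next
  case (snoc x xs)
  show ?case
  proof (cases "x \<in> S")
    case True
    then show ?thesis
      using snoc.prems by (intro exI[of _ "length xs"]) auto
  next
    case False
    then have "S \<subseteq> set xs"
      using snoc.prems(2) by auto
    then obtain n where "n < length xs" "xs ! n \<in> S" "S - {xs ! n} \<subseteq> set (take n xs)"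
      using snoc.IH snoc.prems(1,3) by auto
    then show ?thesis
      by (intro exI[of _ n]) (auto simp: nth_append)
  qed
qed

lemma is_cycle_closed: "is_cycle V E vs es \<Longrightarrow> vs ! length es = vs ! 0"
  unfolding is_cycle_def is_walk_def
  by (metis diff_Suc_1 hd_conv_nth last_conv_nth list.size(3) nat.distinct(1))

lemma is_cycle_nth_inj:
  assumes "is_cycle V E vs es" and "i < length es" and "i' < length es" and "i \<noteq> i'"
  shows "vs ! i \<noteq> vs ! i'"
proof -
  have "length vs = Suc (length es)" "distinct (butlast vs)"
    using assms(1) unfolding is_cycle_def is_walk_def by auto
  then show ?thesis
    using assms(2-) by (simp add: nth_butlast[symmetric] nth_eq_iff_index_eq)
qed

lemma is_cycle_edge_ends:
  assumes "is_cycle V E vs es" and "j < length es"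
  shows "vs ! j \<noteq> vs ! Suc j"
    and "\<exists>i<length es. i \<noteq> j \<and> vs ! j \<in> es ! i"
    and "\<exists>i<length es. i \<noteq> j \<and> vs ! Suc j \<in> es ! i"
proof -
  let ?k = "length es"
  have k: "2 \<le> ?k" and inc: "\<And>i. i < ?k \<Longrightarrow> vs ! i \<in> es ! i \<and> vs ! Suc i \<in> es ! i"
    using assms(1) unfolding is_cycle_def is_walk_def by auto
  note closed = is_cycle_closed[OF assms(1)]
  note inj = is_cycle_nth_inj[OF assms(1)]
  show "vs ! j \<noteq> vs ! Suc j"
  proof (cases "Suc j < ?k")
    case True
    then show ?thesis
      using inj by simp
  next
    case False
    then have "Suc j = ?k" "j \<noteq> 0"
      using assms(2) k by auto
    then show ?thesis
      using inj[of j 0] assms(2) closed k by fastforce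
  qed
  show "\<exists>i<?k. i \<noteq> j \<and> vs ! j \<in> es ! i"
  proof (cases j)
    case 0
    have "?k - 1 < ?k" "Suc (?k - 1) = ?k"
      using k by simp_all
    then have "vs ! j \<in> es ! (?k - 1)"
      using inc[of "?k - 1"] closed 0 by simp
    then show ?thesis
      using k 0 by (intro exI[of _ "?k - 1"]) auto
  next
    case (Suc j')
    then show ?thesis
      using inc[of j'] assms(2) by (intro exI[of _ j']) auto
  qed
  show "\<exists>i<?k. i \<noteq> j \<and> vs ! Suc j \<in> es ! i"
  proof (cases "Suc j < ?k")
    case True
    then show ?thesis
      using inc[of "Suc j"] by (intro exI[of _ "Suc j"]) auto
  next
    case False
    then have "Suc j = ?k" "j \<noteq> 0"
      using assms(2) k by auto
    then show ?thesis
      using inc[of 0] closed by (intro exI[of _ 0]) (auto simp flip: length_greater_0_conv)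
  qed
qed

lemma cyclic_construction_seq_meets_twice:
  assumes "hypergraph V E" and "construction_seq E As" and cycle: "is_cycle V E vs es"
  shows "\<exists>n. 1 \<le> n \<and> n < length As \<and> card (\<Union>(set (take n As)) \<inter> As ! n) \<ge> 2"
proof -
  have As: "distinct As" "set As = E"
    using assms(2) construction_seq_iff by blast+
  have "set es \<subseteq> set As" "es \<noteq> []" "distinct es"
    using cycle As(2) unfolding is_cycle_def is_walk_def by auto
  then obtain n where n: "n < length As" "As ! n \<in> set es"
      and earlier: "set es - {As ! n} \<subseteq> set (take n As)"
    using distinct_last_member[OF As(1)] by blast
  then obtain j where j: "j < length es" "es ! j = As ! n"
    by (auto simp: in_set_conv_nth)
  have other_earlier: "x \<in> \<Union>(set (take n As))" if "i < length es" "i \<noteq> j" "x \<in> es ! i" for i x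
  proof -
    have "es ! i \<noteq> es ! j"
      using \<open>distinct es\<close> that j(1) by (simp add: nth_eq_iff_index_eq)
    then have "es ! i \<in> set (take n As)"
      using earlier nth_mem[OF that(1)] j(2) by blast
    then show ?thesis
      using that(3) by blast
  qed
  let ?p = "vs ! j" and ?q = "vs ! Suc j" and ?I = "\<Union>(set (take n As)) \<inter> As ! n"
  have "?p \<in> As ! n" "?q \<in> As ! n"
    using cycle j unfolding is_cycle_def is_walk_def by auto
  moreover have "?p \<in> \<Union>(set (take n As))" "?q \<in> \<Union>(set (take n As))"
    using is_cycle_edge_ends(2,3)[OF cycle j(1)] other_earlier by blast+
  ultimately have pq: "{?p, ?q} \<subseteq> ?I"
    by blast
  have "As ! n \<in> E"
    using As(2) n(1) by auto
  then have "finite ?I"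
    using assms(1) unfolding hypergraph_def by (meson finite_Int finite_subset)
  then have "card {?p, ?q} \<le> card ?I"
    using pq by (rule card_mono)
  then have "card ?I \<ge> 2"
    using is_cycle_edge_ends(1)[OF cycle j(1)] by simp
  moreover have "n \<noteq> 0"
    using \<open>?p \<in> \<Union>(set (take n As))\<close> by (cases n) auto
  ultimately show ?thesis
    using n(1) by (intro exI[of _ n]) auto
qed

theorem proposition2p2:
  fixes V :: "'a set" and E :: "'a set set"
  assumes "hypergraph V E" and "hg_connected V E" and "card V \<ge> 2"
  shows "(\<exists>As. construction_seq E As)
    \<and> (hypertree V E \<longrightarrow> (\<forall>As. construction_seq E As \<longrightarrow>
          (\<forall>l. 2 \<le> l \<and> l \<le> length As \<longrightarrow>
             card ((\<Union>i\<in>{1..<l}. As ! (i - 1)) \<inter> As ! (l - 1)) = 1)))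
    \<and> (\<not> hypertree V E \<longrightarrow> (\<forall>As. construction_seq E As \<longrightarrow>
          (\<exists>l. 2 \<le> l \<and> l \<le> length As \<and>
             card ((\<Union>i\<in>{1..<l}. As ! (i - 1)) \<inter> As ! (l - 1)) \<ge> 2)))"
proof (intro conjI impI allI)
  show "\<exists>As. construction_seq E As"
    using construction_seq_exists[OF assms] .
next
  fix As l
  assume "hypertree V E" and "construction_seq E As" and "2 \<le> l \<and> l \<le> length As"
  then obtain n where "l = Suc n" "1 \<le> n" "n < length As"
    by (cases l) auto
  with hypertree_construction_seq_meets_once[OF assms(1) \<open>hypertree V E\<close> \<open>construction_seq E As\<close>]
  show "card ((\<Union>i\<in>{1..<l}. As ! (i - 1)) \<inter> As ! (l - 1)) = 1"
    using Union_nth_pred_eq_Union_take[of n As] by simp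
next
  fix As
  assume "\<not> hypertree V E" and "construction_seq E As"
  then obtain vs es where "is_cycle V E vs es"
    using assms(2) unfolding hypertree_def by blast
  then obtain n where "1 \<le> n" "n < length As" "card (\<Union>(set (take n As)) \<inter> As ! n) \<ge> 2"
    using cyclic_construction_seq_meets_twice[OF assms(1) \<open>construction_seq E As\<close>] by blast
  then show "\<exists>l. 2 \<le> l \<and> l \<le> length As \<and>
      card ((\<Union>i\<in>{1..<l}. As ! (i - 1)) \<inter> As ! (l - 1)) \<ge> 2"
    using Union_nth_pred_eq_Union_take[of n As] by (intro exI[of _ "Suc n"]) simp
qed

end
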